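(* Consider the homophily variant of the diffusion model described in the context, with homophily parameter $\gamma\in(0,1/s)$. Then: (i) For every $t\ge1$ there is $\underline H_t\in\mathbb R\cup\{-\infty\}$ with $D_n^t=\{i:H_i>\underline H_t\}$, and the thresholds can be chosen weakly decreasing in $t$. (ii) Let $0<\gamma<\gamma'<1/s$, and let $D_n^t(\gamma)$ and $D_n^t(\gamma')$ be the sets of new-product consumers under $\gamma$ and $\gamma'$ respectively, with all other parameters equal. Then $D_n^t(\gamma')\subseteq D_n^t(\gamma)$ for all $t\ge1$ (equivalently $\underline H_t$ is weakly increasing in $\gamma$ for $t\ge 2$). In words, stronger homophily slows diffusion.
   Context: Homophily variant. There are $N$ individuals partitioned into $G\ge2$ groups $N_1,\dots,N_G$, each of size $N/G$. Members of $N_k$ have aspiration level $H_{N_k}$, with $H_{N_1}>\cdots>H_{N_G}$; write $H_i$ for individual $i$'s level. The incumbent $p_c$ gives payoff $v_L$ to everyone, where $H_{N_2}<v_L<H_{N_1}$. The new product $p_n$ gives individual $i$ the payoff $v_{Hi}\ge H_{N_1}$. Product similarities are $s_{p_c,p_c}=s_{p_n,p_n}=1$, $s_{p_n,p_c}=s_p\in(0,1)$ and $s_{p_c,p_n}=0$. Individual similarities: $s_{i,i}=1$; $s_{i,j}=\gamma s$ if $i\ne j$ and $i,j$ lie in the same group; $s_{i,j}=s$ otherwise. Here $s\in(0,1]$ and $\gamma\in(0,1/s)$. Dynamics. In period $0$ everyone consumes $p_c$ ($D_c^0=\{1,\dots,N\}$, $D_n^0=\emptyset$). For $t\ge1$,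 $U_i^t(p_c)=\sum_{t'=0}^{t-1}\sum_{j\in D_c^{t'}}s_{i,j}(v_L-H_i)$ and $U_i^t(p_n)=s_pU_i^t(p_c)+\sum_{t'=0}^{t-1}\sum_{j\in D_n^{t'}}s_{i,j}(v_{Hj}-H_i)$. Individual $i\in D_n^t$ iff $U_i^t(p_n)>U_i^t(p_c)$; otherwise $i\in D_c^t$. *)

theory Defs
  imports Complex_Main "HOL-Library.Extended_Real"
begin

text \<open>Individuals are 0, ..., mN-1; groups are indexed 0, ..., G-1
  (group index k corresponds to the paper's group N_(k+1)); mgrp i is the group of i.
  mHg k is the aspiration level of group k, mvL is v_L, mvH i is v_(Hi),
  msp is s_p, ms is s and mgam is gamma.\<close>
record model =
  mN :: nat
  mgrp :: "nat \<Rightarrow> nat"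
  mHg :: "nat \<Rightarrow> real"
  mvL :: real
  mvH :: "nat \<Rightarrow> real"
  msp :: real
  ms :: real
  mgam :: real

definition Hlev :: "model \<Rightarrow> nat \<Rightarrow> real" where
  "Hlev M i = mHg M (mgrp M i)"

definition sim :: "model \<Rightarrow> nat \<Rightarrow> nat \<Rightarrow> real" where
  "sim M i j = (if i = j then 1 else if mgrp M i = mgrp M j then mgam M * ms M else ms M)"

text \<open>Cumulative utilities at period t given a history D of new-product consumer sets
  (D t' is D_n^t'; D_c^t' is the complement within the population).\<close>
definition Uold :: "model \<Rightarrow> (nat \<Rightarrow> nat set) \<Rightarrow> nat \<Rightarrow> nat \<Rightarrow> real" where
  "Uold M D t i = (\<Sum>t'<t. \<Sum>j\<in>{..<mN M} - D t'. sim M i j * (mvL M - Hlev M i))"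

definition Unew :: "model \<Rightarrow> (nat \<Rightarrow> nat set) \<Rightarrow> nat \<Rightarrow> nat \<Rightarrow> real" where
  "Unew M D t i = msp M * Uold M D t i
      + (\<Sum>t'<t. \<Sum>j\<in>D t'. sim M i j * (mvH M j - Hlev M i))"

text \<open>Dhist M n is the history of new-product consumer sets, correct on periods 0..n.\<close>
primrec Dhist :: "model \<Rightarrow> nat \<Rightarrow> nat \<Rightarrow> nat set" where
  "Dhist M 0 = (\<lambda>t. {})"
| "Dhist M (Suc n) = (let f = Dhist M n in
      f(Suc n := {i \<in> {..<mN M}. Unew M f (Suc n) i > Uold M f (Suc n) i}))"

definition Dn :: "model \<Rightarrow> nat \<Rightarrow> nat set" where
  "Dn M t = Dhist M t t"

definition homophily_setting :: "model \<Rightarrow> nat \<Rightarrow> bool" where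
  "homophily_setting M G \<longleftrightarrow>
     G \<ge> 2 \<and> G dvd mN M \<and>
     (\<forall>i<mN M. mgrp M i < G) \<and>
     (\<forall>k<G. card {i \<in> {..<mN M}. mgrp M i = k} = mN M div G) \<and>
     (\<forall>k k'. k < k' \<longrightarrow> k' < G \<longrightarrow> mHg M k' < mHg M k) \<and>
     mHg M 1 < mvL M \<and> mvL M < mHg M 0 \<and>
     (\<forall>i<mN M. mvH M i \<ge> mHg M 0) \<and>
     0 < msp M \<and> msp M < 1 \<and>
     0 < ms M \<and> ms M \<le> 1"

end

theory Submission
  imports Defs
begin

text \<open>
  The utility gap \<open>Unew - Uold\<close> of individual i is a sum of per-period gains. Above v_L every
  gain is nonnegative and the first one positive, so those individuals adopt from period 1 on;
  below v_L the gain grows with the set of adopters. Induction on t then gives two facts at once.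
  Adoption is absorbing: an adopter at t had positive total gain while the latest period's gain
  was the largest, so that gain is positive. Adopters form an upper set in aspiration: a
  non-adopter j lies below every earlier adopter, so no adopter shares j's group, and as all
  groups have size N/G, j's cumulative gain is an affine function of H_j that is nonnegative at
  v_L; it stays positive when H_j rises from an adopter's level towards v_L. Upper sets are
  threshold sets, which gives (i). For (ii), raising \<gamma> only increases the weight of i's own
  abstaining group, which lowers i's gain, so by induction the adopters under \<gamma>' also adopt
  under \<gamma>.
\<close>

definition upward_closed :: "'a set \<Rightarrow> ('a \<Rightarrow> real) \<Rightarrow> 'a set \<Rightarrow> bool" where
  "upward_closed A h D \<longleftrightarrow> (\<forall>x\<in>D. \<forall>y\<in>A. h x \<le> h y \<longrightarrow> y \<in> D)"

lemma upward_closed_eq_threshold: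
  assumes "finite A" "D \<subseteq> A" "upward_closed A h D"
  shows "D = {x \<in> A. ereal (h x) > (SUP y\<in>A - D. ereal (h y))}"
proof (intro set_eqI iffI)
  fix x assume x: "x \<in> D"
  have below: "ereal (h y) < ereal (h x)" if "y \<in> A - D" for y
    using assms(3) x that unfolding upward_closed_def by force
  have "(SUP y\<in>A - D. ereal (h y)) < ereal (h x)"
  proof (cases "A - D = {}")
    case True
    show ?thesis by (simp add: True bot_ereal_def)
  next
    case False
    then show ?thesis using assms(1) below by (simp add: finite_Sup_less_iff)
  qed
  then show "x \<in> {x \<in> A. ereal (h x) > (SUP y\<in>A - D. ereal (h y))}" using x assms(2) by auto
next
  fix x assume "x \<in> {x \<in> A. ereal (h x) > (SUP y\<in>A - D. ereal (h y))}"
  moreover have "ereal (h x) \<le> (SUP y\<in>A - D. ereal (h y))" if "x \<in> A - D"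
    using that by (rule SUP_upper)
  ultimately show "x \<in> D" by force
qed

lemma SUP_ereal_finite_neq_infinity:
  assumes "finite A"
  shows "(SUP y\<in>A. ereal (h y)) \<noteq> \<infinity>"
proof -
  have "(SUP y\<in>A. ereal (h y)) \<le> ereal (Max (h ` A))"
    using assms by (intro SUP_least) simp
  then show ?thesis by auto
qed

lemma affine_pos_between:
  fixes P Q a b x :: real
  assumes "0 < P + a * Q" "0 \<le> P + b * Q" "a \<le> x" "x < b"
  shows "0 < P + x * Q"
proof (cases "0 \<le> Q")
  case True
  then have "a * Q \<le> x * Q" using assms(3) by (rule mult_right_mono[rotated])
  then show ?thesis using assms(1) by linarith
next
  case False
  then have "b * Q < x * Q" using assms(4) by (simp add: mult_strict_right_mono_neg)
  then show ?thesis using assms(2) by linarith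
qed

lemma Dhist_eq_Dn: "t \<le> n \<Longrightarrow> Dhist M n t = Dn M t"
proof (induction n)
  case 0
  then show ?case by (simp add: Dn_def)
next
  case (Suc n)
  then show ?case by (cases "t = Suc n") (simp_all add: Dn_def Let_def)
qed

lemma Dn_0 [simp]: "Dn M 0 = {}"
  by (simp add: Dn_def)

lemma Dn_Suc:
  "Dn M (Suc n) = {i \<in> {..<mN M}. Unew M (Dn M) (Suc n) i > Uold M (Dn M) (Suc n) i}"
proof -
  have "\<forall>t'<Suc n. Dhist M n t' = Dn M t'"
    by (simp add: Dhist_eq_Dn)
  then have "Unew M (Dhist M n) (Suc n) = Unew M (Dn M) (Suc n)"
    "Uold M (Dhist M n) (Suc n) = Uold M (Dn M) (Suc n)"
    by (simp_all add: fun_eq_iff Unew_def Uold_def)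
  then show ?thesis by (simp add: Dn_def Let_def)
qed

lemma Dn_subset: "Dn M t \<subseteq> {..<mN M}"
  by (cases t) (auto simp: Dn_Suc)

definition period_gain :: "model \<Rightarrow> nat set \<Rightarrow> nat \<Rightarrow> real" where
  "period_gain M S i = (\<Sum>j<mN M. if j \<in> S then sim M i j * (mvH M j - Hlev M i)
                          else (msp M - 1) * (sim M i j * (mvL M - Hlev M i)))"

lemma period_gain_split:
  assumes "S \<subseteq> {..<mN M}"
  shows "period_gain M S i = (\<Sum>j\<in>S. sim M i j * (mvH M j - Hlev M i))
     + (msp M - 1) * (\<Sum>j\<in>{..<mN M} - S. sim M i j * (mvL M - Hlev M i))"
proof -
  have "{..<mN M} \<inter> S = S" "{..<mN M} \<inter> - S = {..<mN M} - S" using assms by auto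
  then show ?thesis unfolding period_gain_def by (simp add: sum.If_cases sum_distrib_left)
qed

lemma Unew_minus_Uold:
  assumes "\<forall>t'<t. D t' \<subseteq> {..<mN M}"
  shows "Unew M D t i - Uold M D t i = (\<Sum>t'<t. period_gain M (D t') i)"
proof -
  have "(\<Sum>t'<t. period_gain M (D t') i) = (\<Sum>t'<t. (\<Sum>j\<in>D t'. sim M i j * (mvH M j - Hlev M i))
     + (msp M - 1) * (\<Sum>j\<in>{..<mN M} - D t'. sim M i j * (mvL M - Hlev M i)))"
    using assms by (intro sum.cong) (auto simp: period_gain_split)
  also have "\<dots> = (\<Sum>t'<t. \<Sum>j\<in>D t'. sim M i j * (mvH M j - Hlev M i)) + (msp M - 1) * Uold M D t i"
    by (simp add: sum.distrib Uold_def sum_distrib_left)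
  finally show ?thesis by (simp add: Unew_def algebra_simps)
qed

lemma mem_Dn_iff:
  assumes "0 < t"
  shows "i \<in> Dn M t \<longleftrightarrow> i < mN M \<and> 0 < (\<Sum>t'<t. period_gain M (Dn M t') i)"
proof -
  obtain n where t: "t = Suc n" using assms gr0_conv_Suc by blast
  have "Unew M (Dn M) t i - Uold M (Dn M) t i = (\<Sum>t'<t. period_gain M (Dn M t') i)"
    using Dn_subset by (intro Unew_minus_Uold) blast
  then show ?thesis unfolding t Dn_Suc by auto
qed

text \<open>
  The period gain of an individual at aspiration level h whose whole group abstains and who lies
  below every member of S: then all of S is outside the group and the abstainers comprise the
  N/G group members (one of them the individual itself) and the rest of the complement of S.
\<close>
definition level_gain :: "model \<Rightarrow> nat \<Rightarrow> nat set \<Rightarrow> real \<Rightarrow> real" where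
  "level_gain M G S h = ms M * (\<Sum>x\<in>S. mvH M x - h)
     + (msp M - 1) * (mvL M - h) * (1 + mgam M * ms M * (real (mN M div G) - 1)
          + ms M * (real (mN M) - real (card S) - real (mN M div G)))"

lemma sum_level_gain_affine:
  "(\<Sum>k\<in>K. level_gain M G (S k) h) = (\<Sum>k\<in>K. level_gain M G (S k) 0)
      + h * ((\<Sum>k\<in>K. level_gain M G (S k) 1) - (\<Sum>k\<in>K. level_gain M G (S k) 0))"
  by (simp add: level_gain_def sum_subtractf sum.distrib sum_distrib_left algebra_simps)

definition nested_upward_upto :: "model \<Rightarrow> nat \<Rightarrow> bool" where
  "nested_upward_upto M n \<longleftrightarrow>
     (\<forall>t\<le>n. Dn M t \<subseteq> Dn M n \<and> upward_closed {..<mN M} (Hlev M) (Dn M t))"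

lemma nested_upward_upto_below_adopters:
  assumes "nested_upward_upto M n" "j < mN M" "j \<notin> Dn M n" "t \<le> n" "x \<in> Dn M t"
  shows "Hlev M j < Hlev M x"
proof (rule ccontr)
  assume "\<not> Hlev M j < Hlev M x"
  then have "j \<in> Dn M t"
    using assms unfolding nested_upward_upto_def upward_closed_def by force
  then show False using assms unfolding nested_upward_upto_def by blast
qed

locale homophily =
  fixes M :: model and G :: nat
  assumes setting: "homophily_setting M G" and gamma_pos: "0 < mgam M"
begin

abbreviation "N \<equiv> mN M"
abbreviation "H \<equiv> Hlev M"

lemma params: "0 < msp M" "msp M < 1" "0 < ms M" "mHg M 1 < mvL M" "mvL M < mHg M 0"
  using setting by (simp_all add: homophily_setting_def)

lemma group_less: "i < N \<Longrightarrow> mgrp M i < G"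
  using setting by (simp add: homophily_setting_def)

lemma mHg_strict_antimono: "k < k' \<Longrightarrow> k' < G \<Longrightarrow> mHg M k' < mHg M k"
  using setting by (simp add: homophily_setting_def)

lemma card_group: "i < N \<Longrightarrow> card {j \<in> {..<N}. mgrp M j = mgrp M i} = N div G"
  using setting group_less by (simp add: homophily_setting_def)

lemma H_le_top: "i < N \<Longrightarrow> H i \<le> mHg M 0"
  using mHg_strict_antimono[of 0 "mgrp M i"] group_less[of i]
  by (cases "mgrp M i = 0") (auto simp: Hlev_def)

lemma H_neq_vL: "i < N \<Longrightarrow> H i \<noteq> mvL M"
proof (cases "mgrp M i = 0")
  case False
  assume "i < N"
  then have "H i \<le> mHg M 1"
    using False mHg_strict_antimono[of 1 "mgrp M i"] group_less[of i]
    by (cases "mgrp M i = 1") (auto simp: Hlev_def)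
  then show ?thesis using params by simp
qed (use params in \<open>simp add: Hlev_def\<close>)

lemma sim_pos: "0 < sim M i j"
  using gamma_pos params by (simp add: sim_def)

lemma vL_less_vH: "j < N \<Longrightarrow> mvL M < mvH M j"
  using setting params by (fastforce simp: homophily_setting_def)

lemma adopter_term_nonneg: "j < N \<Longrightarrow> i < N \<Longrightarrow> 0 \<le> sim M i j * (mvH M j - H i)"
  using setting H_le_top[of i] sim_pos[of i j] by (fastforce simp: homophily_setting_def)

lemma abstainer_term_eq: "(msp M - 1) * (sim M i j * (mvL M - H i)) = (1 - msp M) * sim M i j * (H i - mvL M)"
  by (simp add: algebra_simps)

lemma abstainer_term_pos_if_high: "mvL M < H i \<Longrightarrow> 0 < (msp M - 1) * (sim M i j * (mvL M - H i))"
  unfolding abstainer_term_eq using params sim_pos[of i j] by simp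

lemma abstainer_term_neg_if_low: "H i < mvL M \<Longrightarrow> (msp M - 1) * (sim M i j * (mvL M - H i)) < 0"
  unfolding abstainer_term_eq using params sim_pos[of i j] by (simp add: mult_pos_neg)

lemma period_gain_nonneg_if_high:
  assumes "i < N" "mvL M < H i"
  shows "0 \<le> period_gain M S i"
  unfolding period_gain_def
  using assms adopter_term_nonneg abstainer_term_pos_if_high by (intro sum_nonneg) (simp add: less_imp_le)

lemma period_gain_empty_pos_if_high:
  assumes "i < N" "mvL M < H i"
  shows "0 < period_gain M {} i"
  unfolding period_gain_def
  using assms abstainer_term_pos_if_high by (intro sum_pos2[of _ i]) (simp_all add: less_imp_le)

lemma mem_Dn_if_high:
  assumes "i < N" "mvL M < H i" "0 < t"
  shows "i \<in> Dn M t"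
proof -
  have "0 < (\<Sum>t'<t. period_gain M (Dn M t') i)"
    using assms period_gain_empty_pos_if_high period_gain_nonneg_if_high
    by (intro sum_pos2[of _ 0]) simp_all
  then show ?thesis using assms mem_Dn_iff by blast
qed

lemma period_gain_mono_if_low:
  assumes "i < N" "H i < mvL M" "S \<subseteq> S'"
  shows "period_gain M S i \<le> period_gain M S' i"
  unfolding period_gain_def
proof (rule sum_mono)
  fix j assume "j \<in> {..<N}"
  then have "0 \<le> sim M i j * (mvH M j - H i)" using assms(1) by (simp add: adopter_term_nonneg)
  then have "(msp M - 1) * (sim M i j * (mvL M - H i)) \<le> sim M i j * (mvH M j - H i)"
    using abstainer_term_neg_if_low[OF assms(2), of j] by linarith
  then show "(if j \<in> S then sim M i j * (mvH M j - H i) else (msp M - 1) * (sim M i j * (mvL M - H i)))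
      \<le> (if j \<in> S' then sim M i j * (mvH M j - H i) else (msp M - 1) * (sim M i j * (mvL M - H i)))"
    using assms(3) by auto
qed

lemma sum_sim_superset_of_group:
  assumes i: "i < N" and C: "C \<subseteq> {..<N}" and group: "{j \<in> {..<N}. mgrp M j = mgrp M i} \<subseteq> C"
  shows "(\<Sum>j\<in>C. sim M i j)
      = 1 + mgam M * ms M * (real (N div G) - 1) + ms M * (real (card C) - real (N div G))"
proof -
  define K where "K = {j \<in> {..<N}. mgrp M j = mgrp M i}"
  have fin: "finite C" "finite K" using C finite_subset unfolding K_def by auto
  have iK: "i \<in> K" using i unfolding K_def by simp
  have KC: "K \<subseteq> C" using group unfolding K_def .
  have cardK: "card K = N div G" unfolding K_def using card_group[OF i] .
  have "(\<Sum>j\<in>C - K. sim M i j) = (\<Sum>j\<in>C - K. ms M)"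
    using C iK by (intro sum.cong) (auto simp: sim_def K_def)
  also have "\<dots> = ms M * (real (card C) - real (card K))"
    using fin KC by (simp add: card_Diff_subset card_mono of_nat_diff)
  finally have outside: "(\<Sum>j\<in>C - K. sim M i j) = ms M * (real (card C) - real (card K))" .
  have "(\<Sum>j\<in>K - {i}. sim M i j) = (\<Sum>j\<in>K - {i}. mgam M * ms M)"
    by (intro sum.cong) (auto simp: sim_def K_def)
  also have "\<dots> = mgam M * ms M * (real (card K) - 1)"
  proof -
    have "1 \<le> card K" using fin(2) iK by (auto simp: Suc_le_eq card_gt_0_iff)
    then show ?thesis using iK by (simp add: of_nat_diff)
  qed
  finally have inside: "(\<Sum>j\<in>K. sim M i j) = 1 + mgam M * ms M * (real (card K) - 1)"
    using sum.remove[OF fin(2) iK, of "sim M i"] by (simp add: sim_def)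
  show ?thesis
    using sum.subset_diff[OF KC fin(1), of "sim M i"] outside inside cardK by simp
qed

lemma period_gain_eq_level_gain:
  assumes i: "i < N" and S: "S \<subseteq> {..<N}" and above: "\<forall>x\<in>S. H i < H x"
  shows "period_gain M S i = level_gain M G S (H i)"
proof -
  have adopters: "(\<Sum>j\<in>S. sim M i j * (mvH M j - H i)) = ms M * (\<Sum>x\<in>S. mvH M x - H i)"
    unfolding sum_distrib_left
  proof (intro sum.cong)
    fix j assume "j \<in> S"
    then have "mgrp M j \<noteq> mgrp M i" "j \<noteq> i" using above by (auto simp: Hlev_def)
    then show "sim M i j * (mvH M j - H i) = ms M * (mvH M j - H i)" by (simp add: sim_def)
  qed simp
  have group: "{j \<in> {..<N}. mgrp M j = mgrp M i} \<subseteq> {..<N} - S"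
    using above by (auto simp: Hlev_def)
  have "finite S" using S finite_subset by blast
  then have card: "card ({..<N} - S) = N - card S" "card S \<le> N"
    using S card_mono[OF _ S] by (simp_all add: card_Diff_subset)
  have abstainers: "(\<Sum>j\<in>{..<N} - S. sim M i j * (mvL M - H i)) = (mvL M - H i)
      * (1 + mgam M * ms M * (real (N div G) - 1) + ms M * (real N - real (card S) - real (N div G)))"
    unfolding sum_distrib_right[symmetric] sum_sim_superset_of_group[OF i Diff_subset group]
    using card by (simp add: of_nat_diff algebra_simps)
  show ?thesis
    unfolding period_gain_split[OF S] adopters abstainers level_gain_def by (simp add: algebra_simps)
qed

lemma level_gain_at_vL_nonneg:
  assumes "S \<subseteq> {..<N}"
  shows "0 \<le> level_gain M G S (mvL M)"
proof -
  have "0 \<le> ms M * (\<Sum>x\<in>S. mvH M x - mvL M)"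
    using assms params vL_less_vH by (intro mult_nonneg_nonneg sum_nonneg) (auto simp: less_imp_le)
  then show ?thesis by (simp add: level_gain_def)
qed

lemma sum_level_gain_pos_upto_vL:
  assumes "\<forall>k\<in>K. S k \<subseteq> {..<N}" "0 < (\<Sum>k\<in>K. level_gain M G (S k) a)" "a \<le> h" "h < mvL M"
  shows "0 < (\<Sum>k\<in>K. level_gain M G (S k) h)"
proof -
  have "0 \<le> (\<Sum>k\<in>K. level_gain M G (S k) (mvL M))"
    using assms(1) level_gain_at_vL_nonneg by (simp add: sum_nonneg)
  then show ?thesis
    using affine_pos_between[of _ a _ "mvL M" h] assms(2-4)
    unfolding sum_level_gain_affine[where h = a] sum_level_gain_affine[where h = h]
      sum_level_gain_affine[where h = "mvL M"] by blast
qed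

lemma Dn_subset_Suc_step:
  assumes "nested_upward_upto M n"
  shows "Dn M n \<subseteq> Dn M (Suc n)"
proof
  fix i assume iD: "i \<in> Dn M n"
  have i: "i < N" using iD Dn_subset by blast
  have n: "0 < n" using iD by (cases n) auto
  show "i \<in> Dn M (Suc n)"
  proof (cases "mvL M < H i")
    case True
    then show ?thesis using mem_Dn_if_high i by simp
  next
    case False
    then have low: "H i < mvL M" using H_neq_vL[OF i] by simp
    have "(\<Sum>t'<n. period_gain M (Dn M t') i) \<le> (\<Sum>t'<n. period_gain M (Dn M n) i)"
      using assms i low unfolding nested_upward_upto_def
      by (intro sum_mono period_gain_mono_if_low) auto
    moreover have "0 < (\<Sum>t'<n. period_gain M (Dn M t') i)"
      using iD n mem_Dn_iff by blast
    ultimately have "0 < real n * period_gain M (Dn M n) i"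
      by simp
    then have "0 < period_gain M (Dn M n) i"
      by (simp add: zero_less_mult_iff)
    then have "0 < (\<Sum>t'<Suc n. period_gain M (Dn M t') i)"
      using \<open>0 < (\<Sum>t'<n. period_gain M (Dn M t') i)\<close> by simp
    then show ?thesis using i mem_Dn_iff by blast
  qed
qed

text \<open>
  A non-adopter j lies below all earlier adopters, and so does any adopter i with H i \<le> H j;
  both cumulative gains are then values of one affine function of the aspiration level.
\<close>
lemma upward_closed_Dn_step:
  assumes inv: "nested_upward_upto M n"
  shows "upward_closed {..<N} H (Dn M (Suc n))"
  unfolding upward_closed_def
proof (intro ballI impI)
  fix i j assume iD: "i \<in> Dn M (Suc n)" and "j \<in> {..<N}" and le: "H i \<le> H j"
  then have i: "i < N" and j: "j < N" using Dn_subset by auto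
  show "j \<in> Dn M (Suc n)"
  proof (cases "j \<in> Dn M n")
    case True
    then show ?thesis using Dn_subset_Suc_step[OF inv] by blast
  next
    case False
    then have above_j: "\<forall>t'<Suc n. \<forall>x\<in>Dn M t'. H j < H x"
      using nested_upward_upto_below_adopters[OF inv j] by (simp add: less_Suc_eq_le)
    then have above_i: "\<forall>t'<Suc n. \<forall>x\<in>Dn M t'. H i < H x"
      using le by force
    have level: "(\<Sum>t'<Suc n. period_gain M (Dn M t') k) = (\<Sum>t'<Suc n. level_gain M G (Dn M t') (H k))"
      if "k < N" "\<forall>t'<Suc n. \<forall>x\<in>Dn M t'. H k < H x" for k
      using that Dn_subset by (intro sum.cong refl period_gain_eq_level_gain) auto
    show ?thesis
    proof (cases "mvL M < H j")
      case True
      then show ?thesis using mem_Dn_if_high j by simp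
    next
      case False
      then have low: "H j < mvL M" using H_neq_vL[OF j] by simp
      have "0 < (\<Sum>t'<Suc n. level_gain M G (Dn M t') (H i))"
        using iD mem_Dn_iff[of "Suc n"] level[OF i above_i] by simp
      then have "0 < (\<Sum>t'<Suc n. level_gain M G (Dn M t') (H j))"
        using Dn_subset by (intro sum_level_gain_pos_upto_vL[where a = "H i", OF _ _ le low]) blast+
      then show ?thesis using j mem_Dn_iff[of "Suc n"] level[OF j above_j] by simp
    qed
  qed
qed

lemma nested_upward_upto_holds: "nested_upward_upto M n"
proof (induction n)
  case 0
  show ?case by (simp add: nested_upward_upto_def upward_closed_def)
next
  case (Suc n)
  then show ?case
    using Dn_subset_Suc_step[OF Suc] upward_closed_Dn_step[OF Suc]
    unfolding nested_upward_upto_def by (fastforce simp: le_Suc_eq)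
qed

lemma Dn_mono: "t \<le> t' \<Longrightarrow> Dn M t \<subseteq> Dn M t'"
  using nested_upward_upto_holds[of t'] by (simp add: nested_upward_upto_def)

lemma upward_closed_Dn: "upward_closed {..<N} H (Dn M t)"
  using nested_upward_upto_holds[of t] by (simp add: nested_upward_upto_def)

lemma below_adopters_if_not_Dn: "j < N \<Longrightarrow> j \<notin> Dn M n \<Longrightarrow> t \<le> n \<Longrightarrow> x \<in> Dn M t \<Longrightarrow> H j < H x"
  by (rule nested_upward_upto_below_adopters[OF nested_upward_upto_holds])

lemma Dn_threshold:
  "\<exists>Hbar :: nat \<Rightarrow> ereal. (\<forall>t. Hbar t \<noteq> \<infinity> \<and> Dn M t = {i \<in> {..<N}. ereal (H i) > Hbar t})
                        \<and> (\<forall>t t'. t \<le> t' \<longrightarrow> Hbar t' \<le> Hbar t)"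
proof (intro exI conjI allI impI)
  fix t t' :: nat
  show "Dn M t = {i \<in> {..<N}. ereal (H i) > (SUP y\<in>{..<N} - Dn M t. ereal (H y))}"
    using upward_closed_Dn Dn_subset by (intro upward_closed_eq_threshold) auto
  show "(SUP y\<in>{..<N} - Dn M t. ereal (H y)) \<noteq> \<infinity>"
    by (simp add: SUP_ereal_finite_neq_infinity)
  assume "t \<le> t'"
  then show "(SUP y\<in>{..<N} - Dn M t'. ereal (H y)) \<le> (SUP y\<in>{..<N} - Dn M t. ereal (H y))"
    using Dn_mono by (intro SUP_subset_mono) auto
qed

end

lemma Hlev_update_gamma [simp]: "Hlev (M\<lparr>mgam := \<gamma>\<rparr>) = Hlev M"
  by (simp add: Hlev_def fun_eq_iff)

lemma homophily_update_gamma: "homophily_setting M G \<Longrightarrow> 0 < \<gamma> \<Longrightarrow> homophily (M\<lparr>mgam := \<gamma>\<rparr>) G"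
  by (simp add: homophily_def homophily_setting_def)

lemma period_gain_update_gamma:
  "period_gain (M\<lparr>mgam := \<gamma>\<rparr>) S i = (\<Sum>j<mN M. if j \<in> S
      then sim (M\<lparr>mgam := \<gamma>\<rparr>) i j * (mvH M j - Hlev M i)
      else (msp M - 1) * (sim (M\<lparr>mgam := \<gamma>\<rparr>) i j * (mvL M - Hlev M i)))"
  by (simp add: period_gain_def cong: if_cong)

text \<open>Raising \<gamma> only reweights i's own group, which abstains: a pure loss for i when H i < v_L.\<close>
lemma period_gain_antimono_gamma:
  assumes "0 < ms M" "\<gamma> \<le> \<gamma>'" "msp M < 1" "Hlev M i < mvL M"
    and "\<forall>j\<in>S. mgrp M j \<noteq> mgrp M i"
  shows "period_gain (M\<lparr>mgam := \<gamma>'\<rparr>) S i \<le> period_gain (M\<lparr>mgam := \<gamma>\<rparr>) S i"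
  unfolding period_gain_update_gamma
proof (intro sum_mono)
  fix j
  have "sim (M\<lparr>mgam := \<gamma>\<rparr>) i j \<le> sim (M\<lparr>mgam := \<gamma>'\<rparr>) i j"
    using assms(1,2) by (simp add: sim_def mult_right_mono)
  moreover have "(msp M - 1) * (mvL M - Hlev M i) \<le> 0"
    using assms(3,4) by (simp add: mult_nonpos_nonneg)
  ultimately have "(msp M - 1) * (mvL M - Hlev M i) * sim (M\<lparr>mgam := \<gamma>'\<rparr>) i j
      \<le> (msp M - 1) * (mvL M - Hlev M i) * sim (M\<lparr>mgam := \<gamma>\<rparr>) i j"
    by (rule mult_left_mono_neg)
  moreover have "sim (M\<lparr>mgam := \<gamma>'\<rparr>) i j = sim (M\<lparr>mgam := \<gamma>\<rparr>) i j" if "j \<in> S"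
    using that assms(5) by (auto simp: sim_def)
  ultimately show
    "(if j \<in> S then sim (M\<lparr>mgam := \<gamma>'\<rparr>) i j * (mvH M j - Hlev M i)
        else (msp M - 1) * (sim (M\<lparr>mgam := \<gamma>'\<rparr>) i j * (mvL M - Hlev M i)))
     \<le> (if j \<in> S then sim (M\<lparr>mgam := \<gamma>\<rparr>) i j * (mvH M j - Hlev M i)
        else (msp M - 1) * (sim (M\<lparr>mgam := \<gamma>\<rparr>) i j * (mvL M - Hlev M i)))"
    by (simp add: algebra_simps)
qed

lemma Dn_antimono_gamma:
  assumes setting: "homophily_setting M G" and "0 < \<gamma>" "\<gamma> < \<gamma>'"
  shows "Dn (M\<lparr>mgam := \<gamma>'\<rparr>) t \<subseteq> Dn (M\<lparr>mgam := \<gamma>\<rparr>) t"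
proof (induction t rule: less_induct)
  case (less t)
  interpret A: homophily "M\<lparr>mgam := \<gamma>\<rparr>" G using homophily_update_gamma assms by simp
  interpret B: homophily "M\<lparr>mgam := \<gamma>'\<rparr>" G using homophily_update_gamma assms by simp
  define D D' where "D = Dn (M\<lparr>mgam := \<gamma>\<rparr>)" and "D' = Dn (M\<lparr>mgam := \<gamma>'\<rparr>)"
  show "D' t \<subseteq> D t" unfolding D_def[symmetric] D'_def[symmetric]
  proof
    fix i assume iD': "i \<in> D' t"
    then have i: "i < mN M" using Dn_subset[of "M\<lparr>mgam := \<gamma>'\<rparr>" t] unfolding D'_def by auto
    obtain n where t: "t = Suc n" using iD' unfolding D'_def by (cases t) auto
    show "i \<in> D t"
    proof (cases "mvL M < Hlev M i")
      case True
      then show ?thesis using A.mem_Dn_if_high i t unfolding D_def by simp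
    next
      case False
      then have low: "Hlev M i < mvL M" using A.H_neq_vL i by fastforce
      show ?thesis
      proof (cases "i \<in> D' n")
        case True
        then show ?thesis using less[of n] A.Dn_mono[of n t] t unfolding D_def D'_def by auto
      next
        case False
        have "period_gain (M\<lparr>mgam := \<gamma>'\<rparr>) (D' t') i \<le> period_gain (M\<lparr>mgam := \<gamma>\<rparr>) (D t') i"
          if "t' < t" for t'
        proof -
          have "\<forall>j\<in>D' t'. mgrp M j \<noteq> mgrp M i"
            using B.below_adopters_if_not_Dn[OF _ False[unfolded D'_def], of t'] that t i
            unfolding D'_def by (fastforce simp: Hlev_def)
          then have "period_gain (M\<lparr>mgam := \<gamma>'\<rparr>) (D' t') i \<le> period_gain (M\<lparr>mgam := \<gamma>\<rparr>) (D' t') i"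
            using assms setting low by (intro period_gain_antimono_gamma) (auto simp: homophily_setting_def)
          also have "\<dots> \<le> period_gain (M\<lparr>mgam := \<gamma>\<rparr>) (D t') i"
            using that less i low unfolding D_def D'_def by (intro A.period_gain_mono_if_low) auto
          finally show ?thesis .
        qed
        then have "(\<Sum>t'<t. period_gain (M\<lparr>mgam := \<gamma>'\<rparr>) (D' t') i)
            \<le> (\<Sum>t'<t. period_gain (M\<lparr>mgam := \<gamma>\<rparr>) (D t') i)"
          by (intro sum_mono) simp
        then show ?thesis
          using iD' t mem_Dn_iff[of t] unfolding D_def D'_def by fastforce
      qed
    qed
  qed
qed

theorem proposition4:
  assumes "homophily_setting M G"
  shows "(\<forall>\<gamma>. 0 < \<gamma> \<longrightarrow> \<gamma> < 1 / ms M \<longrightarrow>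
            (\<exists>Hbar :: nat \<Rightarrow> ereal.
               (\<forall>t\<ge>1. Hbar t \<noteq> \<infinity> \<and>
                   Dn (M\<lparr>mgam := \<gamma>\<rparr>) t = {i \<in> {..<mN M}. ereal (Hlev M i) > Hbar t}) \<and>
               (\<forall>t t'. 1 \<le> t \<longrightarrow> t \<le> t' \<longrightarrow> Hbar t' \<le> Hbar t)))
       \<and> (\<forall>\<gamma> \<gamma>'. 0 < \<gamma> \<longrightarrow> \<gamma> < \<gamma>' \<longrightarrow> \<gamma>' < 1 / ms M \<longrightarrow>
            (\<forall>t\<ge>1. Dn (M\<lparr>mgam := \<gamma>'\<rparr>) t \<subseteq> Dn (M\<lparr>mgam := \<gamma>\<rparr>) t))"
proof (intro conjI allI impI)
  fix \<gamma> :: real assume "0 < \<gamma>"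
  then interpret homophily "M\<lparr>mgam := \<gamma>\<rparr>" G using homophily_update_gamma assms by simp
  from Dn_threshold show "\<exists>Hbar :: nat \<Rightarrow> ereal.
      (\<forall>t\<ge>1. Hbar t \<noteq> \<infinity> \<and> Dn (M\<lparr>mgam := \<gamma>\<rparr>) t = {i \<in> {..<mN M}. ereal (Hlev M i) > Hbar t}) \<and>
      (\<forall>t t'. 1 \<le> t \<longrightarrow> t \<le> t' \<longrightarrow> Hbar t' \<le> Hbar t)"
    by auto
next
  fix \<gamma> \<gamma>' :: real and t :: nat assume "0 < \<gamma>" "\<gamma> < \<gamma>'"
  then show "Dn (M\<lparr>mgam := \<gamma>'\<rparr>) t \<subseteq> Dn (M\<lparr>mgam := \<gamma>\<rparr>) t"
    using Dn_antimono_gamma assms by blast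
qed

end
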